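(* Let $m,t\in\mathbb{N}$ with $m\le t$. For every tree $T$ on $t$ vertices there exist subtrees $S_0,S_1,\dots,S_\ell$ of $T$ whose edge sets partition $E(T)$, such that $|S_0|=m$ and $\ell\le \log_{3/2} t$. Moreover $|V(S_0)\cap V(S_j)|=1$ for every $j\in[\ell]$.
   Context: $|S|$ denotes the number of vertices of $S$; $[\ell]=\{1,\dots,\ell\}$. *)

theory Defs
  imports Complex_Main
begin

definition is_graph :: "'a set \<Rightarrow> 'a set set \<Rightarrow> bool" where
  "is_graph V E \<longleftrightarrow> finite V \<and>
     (\<forall>e\<in>E. \<exists>u v. u \<noteq> v \<and> e = {u, v} \<and> u \<in> V \<and> v \<in> V)"

definition adj :: "'a set set \<Rightarrow> 'a \<Rightarrow> 'a \<Rightarrow> bool" where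
  "adj E u v \<longleftrightarrow> u \<noteq> v \<and> {u, v} \<in> E"

definition graph_connected :: "'a set \<Rightarrow> 'a set set \<Rightarrow> bool" where
  "graph_connected V E \<longleftrightarrow>
     (\<forall>u\<in>V. \<forall>v\<in>V. (u, v) \<in> {(x, y). adj E x y}\<^sup>*)"

definition is_cycle :: "'a set set \<Rightarrow> 'a list \<Rightarrow> bool" where
  "is_cycle E xs \<longleftrightarrow> length xs \<ge> 3 \<and> distinct xs \<and>
     (\<forall>i. Suc i < length xs \<longrightarrow> adj E (xs ! i) (xs ! Suc i)) \<and>
     adj E (last xs) (hd xs)"

definition is_tree :: "'a set \<Rightarrow> 'a set set \<Rightarrow> bool" where
  "is_tree V E \<longleftrightarrow> is_graph V E \<and> V \<noteq> {} \<and> graph_connected V E \<and>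
     \<not> (\<exists>xs. is_cycle E xs)"

definition is_subtree :: "'a set \<times> 'a set set \<Rightarrow> 'a set \<Rightarrow> 'a set set \<Rightarrow> bool" where
  "is_subtree S V E \<longleftrightarrow> fst S \<subseteq> V \<and> snd S \<subseteq> E \<and> is_tree (fst S) (snd S)"

end

theory Submission
  imports Defs "HOL-Library.Transitive_Closure_Table"
begin

(* We prove the stronger rooted statement in which S_0 must contain a prescribed vertex x,
   by induction on the number of vertices. For 2 <= m < |T| delete an edge xv: T falls into
   a subtree A containing x and a subtree B containing v, and T is the union both of A and
   B + xv glued at x and of A + xv and B glued at v. Either S_0 is sought inside one glued
   part and the other part becomes a single new piece, which is only done when the part
   searched has at most 2/3 of the vertices, so that log_{3/2} |T| leaves room for it; or
   one part is absorbed into S_0 whole and a smaller S_0 is sought in the other part, with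
   no new piece. As |A| + |B| = |T|, one of these four moves is always available. *)

abbreviation adj_rel :: "'a set set \<Rightarrow> ('a \<times> 'a) set" where
  "adj_rel F \<equiv> {(x, y). adj F x y}"

lemma adj_sym: "adj F u v \<Longrightarrow> adj F v u"
  by (auto simp: adj_def insert_commute)

lemma adj_mono: "adj F u v \<Longrightarrow> F \<subseteq> F' \<Longrightarrow> adj F' u v"
  unfolding adj_def by auto

lemma reachable_sym:
  assumes "(u, v) \<in> (adj_rel F)\<^sup>*"
  shows "(v, u) \<in> (adj_rel F)\<^sup>*"
proof -
  have "sym (adj_rel F)"
    by (auto simp: sym_def intro: adj_sym)
  then have "sym ((adj_rel F)\<^sup>*)"
    by (rule sym_rtrancl)
  then show ?thesis
    using assms by (rule symD)
qed

lemma reachable_mono: "(u, v) \<in> (adj_rel F)\<^sup>* \<Longrightarrow> F \<subseteq> F' \<Longrightarrow> (u, v) \<in> (adj_rel F')\<^sup>*"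
  by (erule rtrancl_mono[THEN subsetD, rotated]) (auto intro: adj_mono)

lemma reachable_closed:
  assumes "(u, w) \<in> (adj_rel F)\<^sup>*" "is_graph W F" "u \<in> W"
  shows "w \<in> W"
  using assms(1)
proof (induction rule: rtrancl_induct)
  case (step y z)
  then have "{y, z} \<in> F" "y \<noteq> z" by (auto simp: adj_def)
  with assms(2) show ?case by (auto simp: is_graph_def doubleton_eq_iff)
qed (use assms(3) in simp)

lemma graph_connected_Un:
  assumes "graph_connected A FA" "graph_connected B FB" "x \<in> A" "x \<in> B"
  shows "graph_connected (A \<union> B) (FA \<union> FB)"
proof -
  have to_x: "(u, x) \<in> (adj_rel (FA \<union> FB))\<^sup>*" if "u \<in> A \<union> B" for u
    using that assms reachable_mono[of u x FA] reachable_mono[of u x FB]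
    unfolding graph_connected_def by blast
  show ?thesis
    unfolding graph_connected_def
    by (blast intro: rtrancl_trans to_x reachable_sym)
qed

lemma is_cycle_mono: "is_cycle F xs \<Longrightarrow> F \<subseteq> F' \<Longrightarrow> is_cycle F' xs"
  unfolding is_cycle_def by (auto intro: adj_mono)

lemma card_tree_pos: "is_tree W F \<Longrightarrow> 0 < card W"
  by (simp add: is_tree_def is_graph_def card_gt_0_iff)

lemma is_subtree_is_tree: "is_subtree (A, FA) W F \<Longrightarrow> is_tree A FA"
  by (simp add: is_subtree_def)

lemma is_subtree_trans: "is_subtree S A FA \<Longrightarrow> is_subtree (A, FA) W F \<Longrightarrow> is_subtree S W F"
  unfolding is_subtree_def by auto

lemma is_subtree_self: "is_tree W F \<Longrightarrow> is_subtree (W, F) W F"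
  by (simp add: is_subtree_def)

lemma is_subtreeI:
  assumes "is_tree W F" "A \<subseteq> W" "FA \<subseteq> F" "A \<noteq> {}"
    and "\<forall>e\<in>FA. e \<subseteq> A" "graph_connected A FA"
  shows "is_subtree (A, FA) W F"
proof -
  have "is_graph A FA"
    unfolding is_graph_def
  proof (intro conjI ballI)
    show "finite A"
      using assms(1,2) finite_subset unfolding is_tree_def is_graph_def by blast
    fix e assume "e \<in> FA"
    then obtain u v where "u \<noteq> v" "e = {u, v}"
      using assms(1,3) unfolding is_tree_def is_graph_def by blast
    with assms(5) \<open>e \<in> FA\<close> show "\<exists>u v. u \<noteq> v \<and> e = {u, v} \<and> u \<in> A \<and> v \<in> A"
      by blast
  qed
  moreover have "\<nexists>xs. is_cycle FA xs"
    using assms(1,3) is_cycle_mono unfolding is_tree_def by blast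
  ultimately show ?thesis
    using assms(2,3,4,6) unfolding is_subtree_def is_tree_def by simp
qed

lemma is_subtree_Un:
  assumes "is_tree W F" "is_subtree (A, FA) W F" "is_subtree (B, FB) W F" "x \<in> A" "x \<in> B"
  shows "is_subtree (A \<union> B, FA \<union> FB) W F"
proof (rule is_subtreeI[OF assms(1)])
  show "graph_connected (A \<union> B) (FA \<union> FB)"
    using assms(2-5) by (intro graph_connected_Un) (auto simp: is_subtree_def is_tree_def)
  show "\<forall>e\<in>FA \<union> FB. e \<subseteq> A \<union> B"
    using assms(2,3) unfolding is_subtree_def is_tree_def is_graph_def by auto
  show "A \<union> B \<subseteq> W" "FA \<union> FB \<subseteq> F"
    using assms(2,3) by (auto simp: is_subtree_def)
qed (use assms(4) in blast)

lemma is_subtree_singleton: "is_tree W F \<Longrightarrow> x \<in> W \<Longrightarrow> is_subtree ({x}, {}) W F"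
  by (rule is_subtreeI) (auto simp: graph_connected_def)

lemma is_subtree_insert_edge:
  assumes "is_tree W F" "is_subtree (A, FA) W F" "u \<in> A" "adj F u v"
  shows "is_subtree (insert v A, insert {u, v} FA) W F"
proof -
  have "is_subtree ({u, v}, {{u, v}}) W F"
  proof (rule is_subtreeI[OF assms(1)])
    have "(u, v) \<in> (adj_rel {{u, v}})\<^sup>*" using assms(4) by (auto simp: adj_def)
    then show "graph_connected {u, v} {{u, v}}"
      unfolding graph_connected_def by (auto intro: reachable_sym)
    show "{u, v} \<subseteq> W"
      using assms(1,2,3,4) reachable_closed[of u v F W]
      by (auto simp: is_tree_def is_subtree_def)
  qed (use assms(4) in \<open>auto simp: adj_def\<close>)
  from is_subtree_Un[OF assms(1) assms(2) this assms(3)] assms(3)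
  show ?thesis by (simp add: insert_absorb)
qed

lemma tree_neighbour:
  assumes "is_tree W F" "x \<in> W" "2 \<le> card W"
  obtains v where "adj F x v"
proof -
  have "\<not> W \<subseteq> {x}"
    using card_mono[of "{x}" W] assms(3) by auto
  then obtain w where w: "w \<in> W" "w \<noteq> x" by blast
  then have "(x, w) \<in> (adj_rel F)\<^sup>*"
    using assms(1,2) by (simp add: is_tree_def graph_connected_def)
  then show thesis
    using w(2) that by (cases rule: converse_rtranclE) auto
qed

lemma tree_edge_is_bridge:
  assumes "is_tree W F" "adj F x v"
  shows "(x, v) \<notin> (adj_rel (F - {{x, v}}))\<^sup>*"
proof
  let ?G = "F - {{x, v}}"
  assume "(x, v) \<in> (adj_rel ?G)\<^sup>*"
  then have "(adj ?G)\<^sup>*\<^sup>* x v" by (unfold rtranclp_rtrancl_eq)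
  then obtain zs where "rtrancl_path (adj ?G) x zs v" by (auto simp: rtranclp_eq_rtrancl_path)
  then obtain ys where path: "rtrancl_path (adj ?G) x ys v" and "distinct (x # ys)"
    by (rule rtrancl_path_distinct)
  have "length ys \<noteq> 0"
    using path assms(2) by (cases rule: rtrancl_path.cases) (auto simp: adj_def)
  moreover have "length ys \<noteq> 1"
  proof
    assume "length ys = 1"
    then have "adj ?G x v"
      using rtrancl_path_nth[OF path, of 0] rtrancl_path_last[OF path] by (cases ys) auto
    then show False by (simp add: adj_def)
  qed
  ultimately have "2 \<le> length ys" by linarith
  moreover have "adj F ((x # ys) ! i) ((x # ys) ! Suc i)" if "Suc i < length (x # ys)" for i
    using rtrancl_path_nth[OF path, of i] that by (auto intro: adj_mono)
  moreover have "adj F (last (x # ys)) (hd (x # ys))"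
    using rtrancl_path_last[OF path] \<open>2 \<le> length ys\<close> assms(2) by (auto intro: adj_sym)
  ultimately have "is_cycle F (x # ys)"
    using \<open>distinct (x # ys)\<close> by (simp add: is_cycle_def)
  then show False
    using assms(1) by (auto simp: is_tree_def)
qed

definition component_of :: "'a set set \<Rightarrow> 'a \<Rightarrow> 'a set" where
  "component_of G r = {w. (r, w) \<in> (adj_rel G)\<^sup>*}"

lemma component_of_self: "r \<in> component_of G r"
  by (simp add: component_of_def)

lemma component_of_adj: "u \<in> component_of G r \<Longrightarrow> adj G u w \<Longrightarrow> w \<in> component_of G r"
  by (auto simp: component_of_def intro: rtrancl_into_rtrancl)

lemma component_of_subtree:
  assumes "is_tree W F" "G \<subseteq> F" "r \<in> W"
  shows "is_subtree (component_of G r, {e \<in> G. e \<subseteq> component_of G r}) W F"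
    (is "is_subtree (?C, ?FC) W F")
proof (rule is_subtreeI[OF assms(1)])
  have "is_graph W G"
    using assms(1,2) by (auto simp: is_tree_def is_graph_def)
  then show "?C \<subseteq> W"
    using reachable_closed assms(3) by (auto simp: component_of_def)
  have to_root: "(r, w) \<in> (adj_rel ?FC)\<^sup>*" if "(r, w) \<in> (adj_rel G)\<^sup>*" for w
    using that
  proof (induction rule: rtrancl_induct)
    case (step y z)
    then have "y \<in> ?C" "z \<in> ?C"
      by (auto simp: component_of_def intro: rtrancl_into_rtrancl)
    with step have "adj ?FC y z" by (auto simp: adj_def)
    with step.IH show ?case by (auto intro: rtrancl_into_rtrancl)
  qed simp
  show "graph_connected ?C ?FC"
    unfolding graph_connected_def
  proof (intro ballI)
    fix u w assume "u \<in> ?C" "w \<in> ?C"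
    then have "(r, u) \<in> (adj_rel G)\<^sup>*" "(r, w) \<in> (adj_rel G)\<^sup>*"
      by (simp_all add: component_of_def)
    then have "(u, r) \<in> (adj_rel ?FC)\<^sup>*" "(r, w) \<in> (adj_rel ?FC)\<^sup>*"
      by (auto intro: reachable_sym to_root)
    then show "(u, w) \<in> (adj_rel ?FC)\<^sup>*" by (rule rtrancl_trans)
  qed
  show "?FC \<subseteq> F" using assms(2) by blast
  show "?C \<noteq> {}" using component_of_self[of r G] by blast
qed auto

lemma component_of_Diff_edge:
  assumes "(x, w) \<in> (adj_rel F)\<^sup>*"
  shows "w \<in> component_of (F - {{x, v}}) x \<union> component_of (F - {{x, v}}) v"
  using assms
proof (induction rule: rtrancl_induct)
  case (step y z)
  show ?case
  proof (cases "{y, z} = {x, v}")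
    case True
    then show ?thesis by (auto simp: doubleton_eq_iff component_of_self)
  next
    case False
    with step.hyps(2) have "adj (F - {{x, v}}) y z" by (auto simp: adj_def)
    with step.IH show ?thesis by (blast intro: component_of_adj)
  qed
qed (simp add: component_of_self)

lemma component_of_edge:
  assumes "is_graph W G" "e \<in> G" "u \<in> e" "u \<in> component_of G r"
  shows "e \<subseteq> component_of G r"
proof -
  obtain a b where "a \<noteq> b" "e = {a, b}"
    using assms(1,2) unfolding is_graph_def by blast
  then have "adj G a b" "adj G b a"
    using assms(2) by (auto simp: adj_def insert_commute)
  then have "a \<in> component_of G r \<longleftrightarrow> b \<in> component_of G r"
    using component_of_adj by metis
  then show ?thesis
    using assms(3,4) \<open>e = {a, b}\<close> by auto
qed

lemma tree_Diff_edge_components_disjoint: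
  assumes "is_tree W F" "adj F x v"
  shows "component_of (F - {{x, v}}) x \<inter> component_of (F - {{x, v}}) v = {}"
proof -
  let ?G = "F - {{x, v}}"
  have False if "w \<in> component_of ?G x" "w \<in> component_of ?G v" for w
  proof -
    from that have "(x, w) \<in> (adj_rel ?G)\<^sup>*" "(w, v) \<in> (adj_rel ?G)\<^sup>*"
      by (simp_all add: component_of_def reachable_sym)
    then have "(x, v) \<in> (adj_rel ?G)\<^sup>*"
      by (rule rtrancl_trans)
    with tree_edge_is_bridge[OF assms] show False ..
  qed
  then show ?thesis
    by blast
qed

lemma tree_split_at_edge:
  assumes tree: "is_tree W F" and xv: "adj F x v"
  obtains A FA B FB where
    "is_subtree (A, FA) W F" "is_subtree (B, FB) W F" "x \<in> A" "v \<in> B"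
    "A \<inter> B = {}" "A \<union> B = W" "FA \<inter> FB = {}" "{x, v} \<notin> FA \<union> FB"
    "F = insert {x, v} (FA \<union> FB)"
proof -
  define G where "G = F - {{x, v}}"
  define A where "A = component_of G x"
  define B where "B = component_of G v"
  define FA where "FA = {e \<in> G. e \<subseteq> A}"
  define FB where "FB = {e \<in> G. e \<subseteq> B}"
  have "is_graph W F" "G \<subseteq> F"
    using tree by (auto simp: is_tree_def G_def)
  then have graph: "is_graph W G"
    by (auto simp: is_graph_def)
  have edge: "\<exists>a b. a \<noteq> b \<and> e = {a, b} \<and> a \<in> W" if "e \<in> F" for e
    using \<open>is_graph W F\<close> that unfolding is_graph_def by blast
  obtain a b where "{x, v} = {a, b}" "a \<in> W" "b \<in> W"
    using \<open>is_graph W F\<close> xv unfolding is_graph_def adj_def by blast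
  then have "x \<in> W" "v \<in> W"
    by (auto simp: doubleton_eq_iff)
  have sA: "is_subtree (A, FA) W F"
    unfolding A_def FA_def by (rule component_of_subtree[OF tree \<open>G \<subseteq> F\<close> \<open>x \<in> W\<close>])
  have sB: "is_subtree (B, FB) W F"
    unfolding B_def FB_def by (rule component_of_subtree[OF tree \<open>G \<subseteq> F\<close> \<open>v \<in> W\<close>])
  have disjoint: "A \<inter> B = {}"
    unfolding A_def B_def G_def by (rule tree_Diff_edge_components_disjoint[OF tree xv])
  have "W \<subseteq> A \<union> B"
  proof
    fix w assume "w \<in> W"
    then have "(x, w) \<in> (adj_rel F)\<^sup>*"
      using tree \<open>x \<in> W\<close> by (simp add: is_tree_def graph_connected_def)
    then show "w \<in> A \<union> B"
      unfolding A_def B_def G_def by (rule component_of_Diff_edge)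
  qed
  then have cover: "A \<union> B = W"
    using sA sB by (auto simp: is_subtree_def)
  have sides: "e \<subseteq> A \<or> e \<subseteq> B" "e \<noteq> {}" if "e \<in> G" for e
  proof -
    obtain a b where "e = {a, b}" "a \<in> W"
      using edge \<open>e \<in> G\<close> \<open>G \<subseteq> F\<close> by blast
    then have "a \<in> e" "a \<in> A \<or> a \<in> B"
      using cover by auto
    then show "e \<subseteq> A \<or> e \<subseteq> B" "e \<noteq> {}"
      using component_of_edge[OF graph \<open>e \<in> G\<close> \<open>a \<in> e\<close>] unfolding A_def B_def by auto
  qed
  have "FA \<inter> FB = {}"
    using sides(2) disjoint unfolding FA_def FB_def by blast
  moreover have "F = insert {x, v} (FA \<union> FB)"
    using sides(1) xv unfolding FA_def FB_def G_def adj_def by blast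
  moreover have "x \<in> A" "v \<in> B" "{x, v} \<notin> FA \<union> FB"
    by (simp_all add: A_def B_def FA_def FB_def G_def component_of_self)
  ultimately show thesis
    using that sA sB cover disjoint by blast
qed

definition is_wedge ::
    "'a set \<Rightarrow> 'a set set \<Rightarrow> 'a \<Rightarrow> 'a set \<times> 'a set set \<Rightarrow> 'a set \<times> 'a set set \<Rightarrow> bool" where
  "is_wedge W F x P Q \<longleftrightarrow> is_tree W F \<and> is_subtree P W F \<and> is_subtree Q W F \<and>
     fst P \<inter> fst Q = {x} \<and> snd P \<inter> snd Q = {} \<and> fst P \<union> fst Q = W \<and> snd P \<union> snd Q = F"

lemma is_wedge_commute: "is_wedge W F x P Q \<Longrightarrow> is_wedge W F x Q P"
  unfolding is_wedge_def by blast

lemma wedges_at_edge: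
  assumes tree: "is_tree W F" and xv: "adj F x v"
  obtains A FA B FB where
    "is_wedge W F x (A, FA) (insert x B, insert {x, v} FB)"
    "is_wedge W F v (insert v A, insert {x, v} FA) (B, FB)"
    "x \<in> A" "v \<in> B" "card A + card B = card W"
    "card (insert v A) = Suc (card A)" "card (insert x B) = Suc (card B)"
proof -
  obtain A FA B FB where sA: "is_subtree (A, FA) W F" and sB: "is_subtree (B, FB) W F"
    and "x \<in> A" "v \<in> B" "A \<inter> B = {}" "A \<union> B = W" "FA \<inter> FB = {}" "{x, v} \<notin> FA \<union> FB"
    and F: "F = insert {x, v} (FA \<union> FB)"
    using tree_split_at_edge[OF tree xv] by blast
  have sA': "is_subtree (insert v A, insert {x, v} FA) W F"
    using is_subtree_insert_edge[OF tree sA \<open>x \<in> A\<close> xv] .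
  have sB': "is_subtree (insert x B, insert {x, v} FB) W F"
    using is_subtree_insert_edge[OF tree sB \<open>v \<in> B\<close> adj_sym[OF xv]] by (simp add: insert_commute)
  have "finite A" "finite B"
    using sA sB by (auto simp: is_subtree_def is_tree_def is_graph_def)
  have "is_wedge W F x (A, FA) (insert x B, insert {x, v} FB)"
    unfolding is_wedge_def fst_conv snd_conv
  proof (intro conjI)
    show "A \<inter> insert x B = {x}" "A \<union> insert x B = W"
      using \<open>x \<in> A\<close> \<open>A \<inter> B = {}\<close> \<open>A \<union> B = W\<close> by auto
    show "FA \<inter> insert {x, v} FB = {}" "FA \<union> insert {x, v} FB = F"
      using \<open>FA \<inter> FB = {}\<close> \<open>{x, v} \<notin> FA \<union> FB\<close> F by auto
  qed (fact tree sA sB')+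
  moreover have "is_wedge W F v (insert v A, insert {x, v} FA) (B, FB)"
    unfolding is_wedge_def fst_conv snd_conv
  proof (intro conjI)
    show "insert v A \<inter> B = {v}" "insert v A \<union> B = W"
      using \<open>v \<in> B\<close> \<open>A \<inter> B = {}\<close> \<open>A \<union> B = W\<close> by auto
    show "insert {x, v} FA \<inter> FB = {}" "insert {x, v} FA \<union> FB = F"
      using \<open>FA \<inter> FB = {}\<close> \<open>{x, v} \<notin> FA \<union> FB\<close> F by auto
  qed (fact tree sA' sB)+
  moreover have "card A + card B = card W"
    using card_Un_disjoint[OF \<open>finite A\<close> \<open>finite B\<close> \<open>A \<inter> B = {}\<close>] \<open>A \<union> B = W\<close> by simp
  moreover have "card (insert v A) = Suc (card A)" "card (insert x B) = Suc (card B)"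
    using \<open>x \<in> A\<close> \<open>v \<in> B\<close> \<open>A \<inter> B = {}\<close>
    by (auto intro!: card_insert_disjoint \<open>finite A\<close> \<open>finite B\<close>)
  ultimately show thesis
    using that \<open>x \<in> A\<close> \<open>v \<in> B\<close> by blast
qed

definition rooted_decomp ::
    "'a set \<Rightarrow> 'a set set \<Rightarrow> 'a \<Rightarrow> nat \<Rightarrow> nat \<Rightarrow> (nat \<Rightarrow> 'a set \<times> 'a set set) \<Rightarrow> bool" where
  "rooted_decomp W F x m l S \<longleftrightarrow>
     (\<forall>j\<le>l. is_subtree (S j) W F) \<and>
     (\<forall>j\<in>{1..l}. snd (S j) \<noteq> {}) \<and>
     (\<forall>i\<le>l. \<forall>j\<le>l. i \<noteq> j \<longrightarrow> snd (S i) \<inter> snd (S j) = {}) \<and>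
     (\<Union>j\<le>l. snd (S j)) = F \<and>
     card (fst (S 0)) = m \<and> x \<in> fst (S 0) \<and>
     (\<forall>j\<in>{1..l}. card (fst (S 0) \<inter> fst (S j)) = 1)"

lemma rooted_decomp_whole:
  "is_tree W F \<Longrightarrow> x \<in> W \<Longrightarrow> rooted_decomp W F x (card W) 0 (\<lambda>_. (W, F))"
  by (simp add: rooted_decomp_def is_subtree_self)

lemma rooted_decomp_singleton:
  assumes "is_tree W F" "x \<in> W" "F \<noteq> {}"
  shows "rooted_decomp W F x 1 1 (\<lambda>j. if j = 0 then ({x}, {}) else (W, F))"
proof -
  have all_le_1: "(\<forall>j\<le>1. P j) \<longleftrightarrow> P 0 \<and> P 1" for P :: "nat \<Rightarrow> bool"
    by (auto simp: le_Suc_eq)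
  have "{1..1::nat} = {1}" "{..1::nat} = {0, 1}" by auto
  then show ?thesis
    using assms is_subtree_self[OF assms(1)] is_subtree_singleton[OF assms(1,2)]
    unfolding rooted_decomp_def all_le_1 by simp
qed

lemma rooted_decomp_attach:
  assumes wedge: "is_wedge W F x (A, FA) (B, FB)" and "FB \<noteq> {}"
    and decomp: "rooted_decomp A FA x m l S"
  shows "rooted_decomp W F x m (Suc l) (S(Suc l := (B, FB)))"
proof -
  have sA: "is_subtree (A, FA) W F" and sB: "is_subtree (B, FB) W F"
    and "A \<inter> B = {x}" "FA \<inter> FB = {}" "FA \<union> FB = F"
    using wedge by (auto simp: is_wedge_def)
  have piece: "is_subtree (S j) A FA" if "j \<le> l" for j
    using decomp that by (simp add: rooted_decomp_def)
  then have piece_edges: "snd (S j) \<subseteq> FA" if "j \<le> l" for j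
    using that by (simp add: is_subtree_def)
  have root: "fst (S 0) \<inter> B = {x}"
    using piece[of 0] decomp \<open>A \<inter> B = {x}\<close> by (auto simp: is_subtree_def rooted_decomp_def)
  show ?thesis
    unfolding rooted_decomp_def
  proof (intro conjI ballI allI impI)
    fix j assume "j \<le> Suc l"
    then show "is_subtree ((S(Suc l := (B, FB))) j) W F"
      using is_subtree_trans[OF piece sA] sB by (cases "j = Suc l") auto
  next
    fix j assume "j \<in> {1..Suc l}"
    then show "snd ((S(Suc l := (B, FB))) j) \<noteq> {}"
      using decomp \<open>FB \<noteq> {}\<close> by (cases "j = Suc l") (auto simp: rooted_decomp_def)
  next
    fix j assume "j \<in> {1..Suc l}"
    then show "card (fst ((S(Suc l := (B, FB))) 0) \<inter> fst ((S(Suc l := (B, FB))) j)) = 1"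
      using decomp root by (cases "j = Suc l") (auto simp: rooted_decomp_def)
  next
    fix i j assume "i \<le> Suc l" "j \<le> Suc l" "i \<noteq> j"
    then show "snd ((S(Suc l := (B, FB))) i) \<inter> snd ((S(Suc l := (B, FB))) j) = {}"
      using decomp piece_edges[of i] piece_edges[of j] \<open>FA \<inter> FB = {}\<close>
      by (cases "i = Suc l"; cases "j = Suc l") (auto simp: rooted_decomp_def)
  next
    have "(\<Union>j\<le>Suc l. snd ((S(Suc l := (B, FB))) j)) = (\<Union>j\<le>l. snd (S j)) \<union> FB"
      by (auto simp: atMost_Suc)
    then show "(\<Union>j\<le>Suc l. snd ((S(Suc l := (B, FB))) j)) = F"
      using decomp \<open>FA \<union> FB = F\<close> by (simp add: rooted_decomp_def)
  qed (use decomp in \<open>simp_all add: rooted_decomp_def\<close>)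
qed

lemma rooted_decomp_extend_root:
  assumes wedge: "is_wedge W F x (A, FA) (B, FB)" and "y \<in> B"
    and decomp: "rooted_decomp A FA x m l S"
  shows "rooted_decomp W F y (card B + m - 1) l (S(0 := (B \<union> fst (S 0), FB \<union> snd (S 0))))"
    (is "rooted_decomp W F y _ l ?S")
proof -
  have tree: "is_tree W F" and sA: "is_subtree (A, FA) W F" and sB: "is_subtree (B, FB) W F"
    and "A \<inter> B = {x}" "FA \<inter> FB = {}" "FA \<union> FB = F"
    using wedge by (auto simp: is_wedge_def)
  have piece: "is_subtree (S j) A FA" if "j \<le> l" for j
    using decomp that by (simp add: rooted_decomp_def)
  then have piece_vertices: "fst (S j) \<subseteq> A" and piece_edges: "snd (S j) \<subseteq> FA" if "j \<le> l" for j
    using that by (simp_all add: is_subtree_def)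
  have "x \<in> fst (S 0)" "card (fst (S 0)) = m"
    using decomp by (simp_all add: rooted_decomp_def)
  have disjoint: "snd (S i) \<inter> snd (S j) = {}" if "i \<le> l" "j \<le> l" "i \<noteq> j" for i j
    using decomp that by (simp add: rooted_decomp_def)
  have "is_subtree (fst (S 0), snd (S 0)) W F"
    using is_subtree_trans[OF piece sA] by simp
  then have root: "is_subtree (B \<union> fst (S 0), FB \<union> snd (S 0)) W F"
    using is_subtree_Un[OF tree sB] \<open>x \<in> fst (S 0)\<close> \<open>A \<inter> B = {x}\<close> by blast
  have "B \<inter> fst (S 0) = {x}"
    using piece_vertices[of 0] \<open>x \<in> fst (S 0)\<close> \<open>A \<inter> B = {x}\<close> by auto
  moreover have "finite B" "finite (fst (S 0))"
    using sB root by (auto simp: is_subtree_def is_tree_def is_graph_def)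
  ultimately have card_root: "card (B \<union> fst (S 0)) = card B + m - 1"
    using card_Un_Int[of B "fst (S 0)"] \<open>card (fst (S 0)) = m\<close> by simp
  have meet: "(B \<union> fst (S 0)) \<inter> fst (S j) = fst (S 0) \<inter> fst (S j)" if "j \<le> l" for j
    using piece_vertices[OF that] \<open>x \<in> fst (S 0)\<close> \<open>A \<inter> B = {x}\<close> by auto
  have "(\<Union>j\<le>l. snd (?S j)) = FB \<union> (\<Union>j\<le>l. snd (S j))"
    by (auto simp: fun_upd_apply split: if_splits)
  then have edges: "(\<Union>j\<le>l. snd (?S j)) = F"
    using decomp \<open>FA \<union> FB = F\<close> by (auto simp: rooted_decomp_def)
  show ?thesis
    unfolding rooted_decomp_def
  proof (intro conjI ballI allI impI)
    fix j assume "j \<le> l"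
    then show "is_subtree (?S j) W F"
      using root is_subtree_trans[OF piece sA] by (cases "j = 0") auto
  next
    fix j assume "j \<in> {1..l}"
    then show "snd (?S j) \<noteq> {}" "card (fst (?S 0) \<inter> fst (?S j)) = 1"
      using decomp meet[of j] by (auto simp: rooted_decomp_def)
  next
    fix i j assume "i \<le> l" "j \<le> l" "i \<noteq> j"
    then show "snd (?S i) \<inter> snd (?S j) = {}"
      using disjoint[of i j] piece_edges[of i] piece_edges[of j] \<open>FA \<inter> FB = {}\<close>
      by (cases "i = 0"; cases "j = 0") auto
  qed (use edges card_root \<open>y \<in> B\<close> in simp_all)
qed

lemma log_add_one_le:
  fixes b a c :: real
  assumes "1 < b" "0 < a" "b * a \<le> c"
  shows "log b a + 1 \<le> log b c"
proof -
  have "log b a + 1 = log b (b * a)"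
    using assms(1,2) by (simp add: log_mult_pos)
  also have "\<dots> \<le> log b c"
    by (rule log_mono) (use assms in auto)
  finally show ?thesis .
qed

definition decomposable :: "'a set \<Rightarrow> 'a set set \<Rightarrow> 'a \<Rightarrow> nat \<Rightarrow> bool" where
  "decomposable W F x m \<longleftrightarrow>
     (\<exists>l S. rooted_decomp W F x m l S \<and> real l \<le> log (3/2) (card W))"

lemma decomposable_whole:
  assumes "is_tree W F" "x \<in> W"
  shows "decomposable W F x (card W)"
  unfolding decomposable_def
proof (intro exI conjI)
  show "rooted_decomp W F x (card W) 0 (\<lambda>_. (W, F))"
    by (rule rooted_decomp_whole[OF assms])
  show "real 0 \<le> log (3/2) (card W)"
    using card_tree_pos[OF assms(1)] by simp
qed

lemma decomposable_singleton:
  assumes "is_tree W F" "x \<in> W" "2 \<le> card W"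
  shows "decomposable W F x 1"
  unfolding decomposable_def
proof (intro exI conjI)
  obtain v where "adj F x v"
    using tree_neighbour[OF assms] .
  then have "F \<noteq> {}" by (auto simp: adj_def)
  then show "rooted_decomp W F x 1 1 (\<lambda>j. if j = 0 then ({x}, {}) else (W, F))"
    by (rule rooted_decomp_singleton[OF assms(1,2)])
  have "log (3/2) 1 + 1 \<le> log (3/2) (card W)"
    using assms(3) by (intro log_add_one_le) auto
  then show "real 1 \<le> log (3/2) (card W)" by simp
qed

lemma decomposable_attach:
  assumes wedge: "is_wedge W F x (A, FA) (B, FB)" and "FB \<noteq> {}"
    and "3 * card A \<le> 2 * card W" and "decomposable A FA x m"
  shows "decomposable W F x m"
proof -
  obtain l S where decomp: "rooted_decomp A FA x m l S" and l: "real l \<le> log (3/2) (card A)"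
    using assms(4) by (auto simp: decomposable_def)
  have "0 < card A"
    using wedge by (auto simp: is_wedge_def dest: is_subtree_is_tree card_tree_pos)
  then have "log (3/2) (card A) + 1 \<le> log (3/2) (card W)"
    using assms(3) by (intro log_add_one_le) auto
  then have "real (Suc l) \<le> log (3/2) (card W)"
    using l by simp
  with rooted_decomp_attach[OF wedge \<open>FB \<noteq> {}\<close> decomp] show ?thesis
    unfolding decomposable_def by blast
qed

lemma decomposable_extend_root:
  assumes wedge: "is_wedge W F x (A, FA) (B, FB)" and "y \<in> B" and "decomposable A FA x m"
  shows "decomposable W F y (card B + m - 1)"
proof -
  obtain l S where decomp: "rooted_decomp A FA x m l S" and l: "real l \<le> log (3/2) (card A)"
    using assms(3) by (auto simp: decomposable_def)
  have "is_tree A FA" "finite W" "A \<subseteq> W"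
    using wedge by (auto simp: is_wedge_def is_subtree_def is_tree_def is_graph_def)
  then have "0 < card A" "card A \<le> card W"
    by (simp_all add: card_tree_pos card_mono)
  then have "log (3/2) (card A) \<le> log (3/2) (card W)"
    by simp
  with l have "real l \<le> log (3/2) (card W)"
    by linarith
  with rooted_decomp_extend_root[OF wedge \<open>y \<in> B\<close> decomp] show ?thesis
    unfolding decomposable_def by blast
qed

lemma decomposable_split_edge:
  fixes W :: "'a set"
  assumes tree: "is_tree W F" and "x \<in> W" "2 \<le> m" "m < card W"
    and IH: "\<And>(W' :: 'a set) F' x' m'. card W' < card W \<Longrightarrow> is_tree W' F' \<Longrightarrow> x' \<in> W' \<Longrightarrow>
      1 \<le> m' \<Longrightarrow> m' \<le> card W' \<Longrightarrow> decomposable W' F' x' m'"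
  shows "decomposable W F x m"
proof -
  obtain v where "adj F x v"
    using tree_neighbour[OF tree \<open>x \<in> W\<close>] assms(3,4) by fastforce
  then obtain A FA B FB where
    wx: "is_wedge W F x (A, FA) (insert x B, insert {x, v} FB)" and
    wv: "is_wedge W F v (insert v A, insert {x, v} FA) (B, FB)" and
    "x \<in> A" "v \<in> B" and n: "card A + card B = card W" and
    cA: "card (insert v A) = Suc (card A)" and cB: "card (insert x B) = Suc (card B)"
    by (rule wedges_at_edge[OF tree])
  have trees: "is_tree A FA" "is_tree B FB" "is_tree (insert x B) (insert {x, v} FB)"
    using wx wv by (auto simp: is_wedge_def dest: is_subtree_is_tree)
  then have "0 < card A" "0 < card B"
    by (simp_all add: card_tree_pos)
  consider "card A < m" | "m \<le> card A" "3 * card A \<le> 2 * card W"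
    | "m \<le> Suc (card B)" "2 * card W < 3 * card A" | "Suc (card B) < m" "m \<le> card A"
    by linarith
  then show ?thesis
  proof cases
    case 1
    then have "decomposable B FB v (m - card A)"
      using IH[OF _ trees(2) \<open>v \<in> B\<close>] assms(4) \<open>0 < card A\<close> n by simp
    from decomposable_extend_root[OF is_wedge_commute[OF wv] _ this, of x]
    show ?thesis using 1 \<open>x \<in> A\<close> cA by simp
  next
    case 2
    then have "decomposable A FA x m"
      using IH[OF _ trees(1) \<open>x \<in> A\<close>] assms(3) \<open>0 < card B\<close> n by simp
    then show ?thesis
      using decomposable_attach[OF wx _ 2(2)] by simp
  next
    case 3
    then obtain u where "adj FA x u"
      using tree_neighbour[OF trees(1) \<open>x \<in> A\<close>] \<open>0 < card B\<close> n by fastforce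
    then have "FA \<noteq> {}" by (auto simp: adj_def)
    have "decomposable (insert x B) (insert {x, v} FB) x m"
      using IH[OF _ trees(3)] 3 assms(3) \<open>0 < card B\<close> n cB by simp
    then show ?thesis
      using decomposable_attach[OF is_wedge_commute[OF wx] \<open>FA \<noteq> {}\<close>] 3 \<open>0 < card B\<close> n cB
      by simp
  next
    case 4
    then have "decomposable A FA x (m - card B)"
      using IH[OF _ trees(1) \<open>x \<in> A\<close>] assms(4) \<open>0 < card B\<close> n by simp
    from decomposable_extend_root[OF wx _ this, of x]
    show ?thesis using 4 cB by simp
  qed
qed

theorem tree_decomposable:
  assumes "is_tree W F" "x \<in> W" "1 \<le> m" "m \<le> card W"
  shows "decomposable W F x m"
  using assms
proof (induction "card W" arbitrary: W F x m rule: less_induct)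
  case less
  consider "m = card W" | "m = 1" "2 \<le> card W" | "2 \<le> m" "m < card W"
    using less.prems(3,4) by linarith
  then show ?case
  proof cases
    case 1
    then show ?thesis using decomposable_whole[OF less.prems(1,2)] by simp
  next
    case 2
    then show ?thesis using decomposable_singleton[OF less.prems(1,2)] by simp
  next
    case 3
    then show ?thesis using decomposable_split_edge[OF less.prems(1,2)] less.hyps by blast
  qed
qed

theorem corollary3p6:
  fixes V :: "'a set" and E :: "'a set set" and m t :: nat
  assumes "is_tree V E" and "card V = t" and "1 \<le> m" and "m \<le> t"
  shows "\<exists>(l::nat) (S :: nat \<Rightarrow> 'a set \<times> 'a set set).
           (\<forall>j\<le>l. is_subtree (S j) V E) \<and>
           (\<forall>j\<in>{1..l}. snd (S j) \<noteq> {}) \<and>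
           (\<forall>i\<le>l. \<forall>j\<le>l. i \<noteq> j \<longrightarrow> snd (S i) \<inter> snd (S j) = {}) \<and>
           (\<Union>j\<le>l. snd (S j)) = E \<and>
           card (fst (S 0)) = m \<and>
           real l \<le> log (3/2) (real t) \<and>
           (\<forall>j\<in>{1..l}. card (fst (S 0) \<inter> fst (S j)) = 1)"
proof -
  obtain x where "x \<in> V"
    using assms(1) by (auto simp: is_tree_def)
  then have "decomposable V E x m"
    using tree_decomposable[OF assms(1) _ assms(3)] assms(2,4) by simp
  then show ?thesis
    using assms(2) unfolding decomposable_def rooted_decomp_def by blast
qed

end
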